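(* Let $p$ be a prime and $n\ge 1$. A $C_{p^n}$-transfer system $T$ is lesser simply paired if and only if either $T$ is connected, or $T$ has exactly two connected components and the connected component of the trivial subgroup consists of the trivial subgroup alone. Consequently the number of lesser simply paired $C_{p^n}$-transfer systems is $\mathrm{Cat}(n)+\mathrm{Cat}(n-1)=\frac{(5n-1)(2n-2)!}{(n-1)!(n+1)!}$, where $\mathrm{Cat}(m)=\frac{(2m)!}{(m+1)!m!}$, and their proportion among all $C_{p^n}$-transfer systems is $\frac{5n^2+9n-2}{16n^2-4}$.
   Context: The subgroups of $C_{p^n}$ are $C_{p^i}$, $0\le i\le n$, totally ordered by inclusion. A $C_{p^n}$-transfer system is a partial order $\to$ on these subgroups refining inclusion ($K\to H$ implies $K\le H$), reflexive, transitive, and closed under restriction ($K\to H$ implies $K\cap L\to H\cap L$ for all $L$). The total number of $C_{p^n}$-transfer systems is $\mathrm{Cat}(n+1)$. Connected components are those of the underlying undirected graph. A transfer system is saturated if whenever $L\le K\le H$ and $L\to H$ is in it then $K\to H$ is in it; $\mathrm{Hull}(T)$ is the smallest saturated transfer system containing $T$; $T_c$ is the complete transfer system. A pair $(T,T')$ is compatible if $T\subseteq T'$ and for all subgroups $A,B,C$ with $B,C\le A$: if $B\to A$ is in $T$ and $B\cap C\to B$ is in $T'$ then $C\to A$ is in $T'$. $T$ is lesser simply paired if for every transfer system $T'\supseteq T$, $(T,T')$ is compatible iff $T'\in\{\mathrm{Hull}(T),T_c\}$. *)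

theory Defs
  imports Complex_Main "HOL-Computational_Algebra.Primes"
begin

text \<open>The subgroups of the cyclic group C_{p^n} are C_{p^i}, 0 <= i <= n, totally ordered
by inclusion. We represent the subgroup C_{p^i} by its index i in {0..n}; inclusion becomes
the order on nat and intersection becomes min. A relation on subgroups is a set of pairs
(K,H) meaning K -> H.\<close>

definition subgrps :: "nat \<Rightarrow> nat set" where
  "subgrps n = {0..n}"

definition transfer_system :: "nat \<Rightarrow> (nat \<times> nat) set \<Rightarrow> bool" where
  "transfer_system n T \<longleftrightarrow>
     T \<subseteq> subgrps n \<times> subgrps n \<and>
     (\<forall>K H. (K, H) \<in> T \<longrightarrow> K \<le> H) \<and>
     (\<forall>K \<in> subgrps n. (K, K) \<in> T) \<and>
     (\<forall>K H L. (K, H) \<in> T \<longrightarrow> (H, L) \<in> T \<longrightarrow> (K, L) \<in> T) \<and>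
     (\<forall>K H L. (K, H) \<in> T \<longrightarrow> L \<in> subgrps n \<longrightarrow> (min K L, min H L) \<in> T)"

definition components :: "nat \<Rightarrow> (nat \<times> nat) set \<Rightarrow> nat set set" where
  "components n T = subgrps n // ((T \<union> T\<inverse>)\<^sup>* \<inter> (subgrps n \<times> subgrps n))"

definition component_of :: "nat \<Rightarrow> (nat \<times> nat) set \<Rightarrow> nat \<Rightarrow> nat set" where
  "component_of n T x = {y \<in> subgrps n. (x, y) \<in> (T \<union> T\<inverse>)\<^sup>*}"

definition connected_ts :: "nat \<Rightarrow> (nat \<times> nat) set \<Rightarrow> bool" where
  "connected_ts n T \<longleftrightarrow> card (components n T) = 1"

definition saturated :: "nat \<Rightarrow> (nat \<times> nat) set \<Rightarrow> bool" where
  "saturated n T \<longleftrightarrow>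
     (\<forall>L K H. L \<le> K \<longrightarrow> K \<le> H \<longrightarrow> (L, H) \<in> T \<longrightarrow> (K, H) \<in> T)"

definition Hull :: "nat \<Rightarrow> (nat \<times> nat) set \<Rightarrow> (nat \<times> nat) set" where
  "Hull n T = \<Inter> {T'. transfer_system n T' \<and> saturated n T' \<and> T \<subseteq> T'}"

definition complete_ts :: "nat \<Rightarrow> (nat \<times> nat) set" where
  "complete_ts n = {(K, H). K \<le> H \<and> H \<le> n}"

definition compatible :: "nat \<Rightarrow> (nat \<times> nat) set \<Rightarrow> (nat \<times> nat) set \<Rightarrow> bool" where
  "compatible n T T' \<longleftrightarrow> T \<subseteq> T' \<and>
     (\<forall>A \<in> subgrps n. \<forall>B \<in> subgrps n. \<forall>C \<in> subgrps n. B \<le> A \<longrightarrow> C \<le> A \<longrightarrow>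
        (B, A) \<in> T \<longrightarrow> (min B C, B) \<in> T' \<longrightarrow> (C, A) \<in> T')"

definition lesser_simply_paired :: "nat \<Rightarrow> (nat \<times> nat) set \<Rightarrow> bool" where
  "lesser_simply_paired n T \<longleftrightarrow>
     (\<forall>T'. transfer_system n T' \<longrightarrow> T \<subseteq> T' \<longrightarrow>
        (compatible n T T' \<longleftrightarrow> T' = Hull n T \<or> T' = complete_ts n))"

definition catalan :: "nat \<Rightarrow> nat" where
  "catalan m = fact (2 * m) div (fact (m + 1) * fact m)"

end

theory Submission
  imports Defs "HOL-Computational_Algebra.Formal_Power_Series"
begin

text \<open>On a chain, restriction along \<open>min\<close> only shortens arrows, so a transfer system on
  \<open>0 < 1 < \<dots> < n\<close> is a partial order refining \<open>\<le>\<close> that is closed under \<open>K \<rightarrow> H, K \<le> L \<le> H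
  \<Longrightarrow> K \<rightarrow> L\<close>. If the bottom transfers exactly up to \<open>j\<close>, no other arrow crosses \<open>j\<close>, so the
  system splits into independent ones on \<open>1, \<dots>, j\<close> and \<open>j + 1, \<dots>, n\<close>: the counts satisfy
  the Catalan recurrence, and there are \<open>Cat (n + 1)\<close> of them.

  The hull of \<open>T\<close> relates \<open>u \<le> v\<close> exactly when \<open>u\<close> and \<open>v\<close> lie in one connected component
  (components are intervals), and \<open>(T, T')\<close> is compatible iff \<open>T'\<close> contains the hull. If
  neither \<open>0\<close> nor \<open>1\<close> is connected to \<open>n\<close>, adjoining all arrows out of \<open>0\<close> to the hull gives
  a third compatible system; otherwise every system above the hull either has no arrow out of
  \<open>0\<close>, and is the hull, or has one and then everything. So \<open>T\<close> is lesser simply paired iff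
  \<open>0 \<rightarrow> n\<close> or \<open>1 \<rightarrow> n\<close>, and these two conditions are counted by \<open>Cat n\<close> and \<open>Cat (n - 1)\<close>.\<close>

lemma Suc_dvd_central_binomial: "Suc k dvd (2 * k choose k)"
proof -
  have "Suc k * (2 * k choose Suc k) = k * (2 * k choose k)"
  proof (cases k)
    case (Suc m)
    then show ?thesis
      using Suc_times_binomial_add[of k m] by (simp add: mult_2)
  qed simp
  then have "Suc k * ((2 * k choose k) - (2 * k choose Suc k)) = 2 * k choose k"
    by (simp add: diff_mult_distrib2)
  then show ?thesis
    by (metis dvd_triv_left)
qed

lemma real_catalan: "real (catalan k) = fact (2 * k) / (fact (Suc k) * fact k)"
proof -
  obtain d where d: "2 * k choose k = Suc k * d"
    using Suc_dvd_central_binomial by (blast elim: dvdE)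
  have "fact (2 * k) = fact k * fact k * (2 * k choose k)"
    using binomial_fact_lemma[of k "2 * k"] by (simp add: mult_2)
  also have "\<dots> = (fact (Suc k) * fact k) * d"
    unfolding d by (simp add: algebra_simps)
  finally have "fact (Suc k) * fact k dvd (fact (2 * k) :: nat)"
    by simp
  then have "real (catalan k) = real (fact (2 * k)) / real (fact (Suc k) * fact k)"
    unfolding catalan_def Suc_eq_plus1[symmetric] by (rule real_of_nat_div)
  then show ?thesis
    by (simp only: of_nat_mult of_nat_fact)
qed

lemma catalan_pos: "catalan k > 0"
  using real_catalan[of k] by (metis fact_gt_zero divide_pos_pos mult_pos_pos of_nat_0_less_iff)

lemma catalan_Suc_ratio:
  "(real k + 2) * real (catalan (Suc k)) = 2 * (2 * real k + 1) * real (catalan k)"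
proof -
  define A C where "A = (fact (2 * k) :: real)" and "C = (fact k :: real)"
  have "C > 0"
    unfolding C_def by simp
  have cat: "real (catalan k) = A / ((real k + 1) * C * C)"
    unfolding A_def C_def real_catalan by (simp add: algebra_simps)
  have cat_Suc: "real (catalan (Suc k))
      = (2 * k + 2) * (2 * k + 1) * A / ((real k + 2) * (real k + 1) * C * ((real k + 1) * C))"
    unfolding A_def C_def real_catalan by (simp add: algebra_simps)
  show ?thesis
    unfolding cat cat_Suc using \<open>C > 0\<close> by (simp add: divide_simps) (simp add: algebra_simps)
qed

lemma gchoose_half_catalan:
  "((1/2 :: real) gchoose Suc k) * (-4) ^ Suc k = -2 * real (catalan k)"
proof (induction k)
  case (Suc k)
  have step: "(real k + 2) * ((1/2) gchoose Suc (Suc k)) = - (2 * real k + 1) / 2 * ((1/2) gchoose Suc k)"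
    using gbinomial_mult_1[of "1/2 :: real" "Suc k"] by (simp add: field_simps)
  have "(real k + 2) * (((1/2) gchoose Suc (Suc k)) * (-4) ^ Suc (Suc k))
        = ((real k + 2) * ((1/2) gchoose Suc (Suc k))) * (-4) * (-4) ^ Suc k"
    by (simp only: power_Suc[of _ "Suc k"] ac_simps)
  also have "\<dots> = 2 * (2 * real k + 1) * (((1/2) gchoose Suc k) * (-4) ^ Suc k)"
    unfolding step by (simp add: field_simps)
  also have "\<dots> = (real k + 2) * (-2 * real (catalan (Suc k)))"
    unfolding Suc.IH mult.left_commute[of _ "-2"] catalan_Suc_ratio by simp
  finally show ?case
    by (simp only: mult_left_cancel[of "real k + 2"] add_nonneg_pos of_nat_0_le_iff)
qed (simp add: catalan_def)

lemma catalan_Suc_convolution: "catalan (Suc k) = (\<Sum>j=0..k. catalan j * catalan (k - j))"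
proof -
  define s where "s i = ((1/2 :: real) gchoose i) * (-4) ^ i" for i
  have s0: "s 0 = 1" and sSuc: "s (Suc i) = -2 * real (catalan i)" for i
    unfolding s_def using gchoose_half_catalan by simp_all
  \<comment> \<open>\<open>\<Sum>i. s i * x ^ i = sqrt (1 - 4 * x)\<close>, whose square has no terms of degree \<open>\<ge> 2\<close>\<close>
  have vandermonde: "(\<Sum>i=0..m. s i * s (m - i)) = (-4) ^ m * (1 gchoose m)" for m
  proof -
    have "(\<Sum>i=0..m. s i * s (m - i))
          = (-4) ^ m * (\<Sum>i=0..m. ((1/2 :: real) gchoose i) * ((1/2) gchoose (m - i)))"
      unfolding s_def sum_distrib_left
      by (rule sum.cong) (auto simp: power_add[symmetric] algebra_simps)
    then show ?thesis
      using gbinomial_Vandermonde[of "1/2 :: real" "1/2" m] by simp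
  qed
  have "(1 :: real) gchoose Suc (Suc k) = 0"
    using binomial_gbinomial[of 1 "Suc (Suc k)", where 'a=real] by simp
  then have "0 = (\<Sum>i=0..Suc (Suc k). s i * s (Suc (Suc k) - i))"
    by (simp only: vandermonde mult_zero_right)
  also have "\<dots> = s 0 * s (Suc (Suc k)) + (\<Sum>i=0..Suc k. s (Suc i) * s (Suc k - i))"
    by (subst sum.atLeast0_atMost_Suc_shift) simp
  also have "(\<Sum>i=0..Suc k. s (Suc i) * s (Suc k - i))
             = (\<Sum>i=0..k. s (Suc i) * s (Suc k - i)) + s (Suc (Suc k)) * s 0"
    by (subst sum.atLeast0_atMost_Suc) simp
  also have "(\<Sum>i=0..k. s (Suc i) * s (Suc k - i)) = 4 * (\<Sum>j=0..k. real (catalan j) * catalan (k - j))"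
    unfolding sum_distrib_left by (rule sum.cong) (auto simp: sSuc Suc_diff_le)
  finally have "0 = 2 * s (Suc (Suc k)) + 4 * (\<Sum>j=0..k. real (catalan j) * catalan (k - j))"
    by (simp add: s0)
  then show ?thesis
    by (simp add: sSuc flip: of_nat_sum of_nat_mult)
qed

lemma catalan_add_catalan_pred:
  assumes "1 \<le> n"
  shows "real (catalan n + catalan (n - 1))
           = real ((5 * n - 1) * fact (2 * n - 2)) / real (fact (n - 1) * fact (n + 1))"
proof -
  obtain m where n: "n = Suc m"
    using assms by (cases n) auto
  have "real (catalan (Suc m) + catalan m) = (5 * real m + 4) / (real m + 2) * real (catalan m)"
    using catalan_Suc_ratio[of m] by (simp add: field_simps)
  also have "\<dots> = (5 * real m + 4) / (real m + 2) * (fact (2 * m) / ((real m + 1) * fact m * fact m))"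
    by (simp add: real_catalan algebra_simps)
  also have "\<dots> = (5 * real m + 4) * fact (2 * m) / (fact m * ((real m + 2) * (real m + 1) * fact m))"
    by (simp add: field_simps)
  also have "\<dots> = real ((5 * n - 1) * fact (2 * n - 2)) / real (fact (n - 1) * fact (n + 1))"
    by (simp add: n algebra_simps)
  finally show ?thesis
    by (simp add: n)
qed

lemma catalan_add_pred_div_catalan_Suc:
  assumes "1 \<le> n"
  shows "real (catalan n + catalan (n - 1)) / real (catalan (Suc n))
           = (5 * real n ^ 2 + 9 * real n - 2) / (16 * real n ^ 2 - 4)"
proof -
  obtain m where n: "n = Suc m"
    using assms by (cases n) auto
  define c where "c = real (catalan m)"
  have "c > 0"
    unfolding c_def using catalan_pos by simp
  have c1: "real (catalan (Suc m)) = 2 * (2 * real m + 1) / (real m + 2) * c"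
    unfolding c_def using catalan_Suc_ratio[of m] by (simp add: field_simps)
  have c2: "real (catalan (Suc (Suc m))) = 2 * (2 * real m + 3) / (real m + 3) * (2 * (2 * real m + 1) / (real m + 2) * c)"
    unfolding c1[symmetric] using catalan_Suc_ratio[of "Suc m"] by (simp add: field_simps)
  have "5 * real (Suc m) ^ 2 + 9 * real (Suc m) - 2 = (5 * real m + 4) * (real m + 3)"
    and "16 * real (Suc m) ^ 2 - 4 = 4 * (2 * real m + 1) * (2 * real m + 3)"
    by (simp_all add: power2_eq_square algebra_simps)
  then show ?thesis
    unfolding n of_nat_add c1 c2 diff_Suc_1 c_def[symmetric] using \<open>c > 0\<close>
    by (simp add: divide_simps) (simp add: algebra_simps)
qed

definition transfer_system_on :: "nat \<Rightarrow> nat \<Rightarrow> (nat \<times> nat) set \<Rightarrow> bool" where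
  "transfer_system_on a m T \<longleftrightarrow>
     T \<subseteq> {a..<a + m} \<times> {a..<a + m} \<and>
     (\<forall>K H. (K, H) \<in> T \<longrightarrow> K \<le> H) \<and>
     (\<forall>K \<in> {a..<a + m}. (K, K) \<in> T) \<and>
     (\<forall>K H L. (K, H) \<in> T \<longrightarrow> (H, L) \<in> T \<longrightarrow> (K, L) \<in> T) \<and>
     (\<forall>K H L. (K, H) \<in> T \<longrightarrow> K \<le> L \<longrightarrow> L \<le> H \<longrightarrow> (K, L) \<in> T)"

lemma transfer_system_on_subset:
  "transfer_system_on a m T \<Longrightarrow> T \<subseteq> {a..<a + m} \<times> {a..<a + m}"
  unfolding transfer_system_on_def by blast

lemma transfer_system_on_le: "transfer_system_on a m T \<Longrightarrow> (K, H) \<in> T \<Longrightarrow> K \<le> H"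
  unfolding transfer_system_on_def by blast

lemma transfer_system_on_refl:
  "transfer_system_on a m T \<Longrightarrow> a \<le> K \<Longrightarrow> K < a + m \<Longrightarrow> (K, K) \<in> T"
  unfolding transfer_system_on_def Ball_def atLeastLessThan_iff by blast

lemma transfer_system_on_trans:
  "transfer_system_on a m T \<Longrightarrow> (K, H) \<in> T \<Longrightarrow> (H, L) \<in> T \<Longrightarrow> (K, L) \<in> T"
  unfolding transfer_system_on_def by blast

lemma transfer_system_on_down:
  "transfer_system_on a m T \<Longrightarrow> (K, H) \<in> T \<Longrightarrow> K \<le> L \<Longrightarrow> L \<le> H \<Longrightarrow> (K, L) \<in> T"
  unfolding transfer_system_on_def by blast

lemma transfer_system_onI:
  assumes "\<And>K H. (K, H) \<in> T \<Longrightarrow> a \<le> K \<and> K \<le> H \<and> H < a + m"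
    and "\<And>K. a \<le> K \<Longrightarrow> K < a + m \<Longrightarrow> (K, K) \<in> T"
    and "\<And>K H L. (K, H) \<in> T \<Longrightarrow> (H, L) \<in> T \<Longrightarrow> (K, L) \<in> T"
    and "\<And>K H L. (K, H) \<in> T \<Longrightarrow> K \<le> L \<Longrightarrow> L \<le> H \<Longrightarrow> (K, L) \<in> T"
  shows "transfer_system_on a m T"
  unfolding transfer_system_on_def
proof (intro conjI allI impI ballI subsetI)
  fix p
  assume "p \<in> T"
  then show "p \<in> {a..<a + m} \<times> {a..<a + m}"
    using assms(1)[of "fst p" "snd p"] by (cases p) auto
next
  fix K H
  assume "(K, H) \<in> T"
  then show "K \<le> H"
    using assms(1) by blast
next
  fix K
  assume "K \<in> {a..<a + m}"
  then show "(K, K) \<in> T"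
    using assms(2) by simp
qed (use assms(3,4) in blast)+

lemma transfer_system_on_bounds:
  assumes "transfer_system_on a m T" "(K, H) \<in> T"
  shows "a \<le> K \<and> K \<le> H \<and> H < a + m"
  using transfer_system_on_subset[OF assms(1)] transfer_system_on_le[OF assms] assms(2) by auto

lemma restriction_closed_iff_down_closed:
  assumes sub: "T \<subseteq> subgrps n \<times> subgrps n" and le: "\<forall>K H. (K, H) \<in> T \<longrightarrow> K \<le> H"
    and refl: "\<forall>K \<in> subgrps n. (K, K) \<in> T"
  shows "(\<forall>K H L. (K, H) \<in> T \<longrightarrow> L \<in> subgrps n \<longrightarrow> (min K L, min H L) \<in> T) \<longleftrightarrow>
    (\<forall>K H L. (K, H) \<in> T \<longrightarrow> K \<le> L \<longrightarrow> L \<le> H \<longrightarrow> (K, L) \<in> T)"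
proof (intro iffI allI impI)
  fix K H L
  assume restr: "\<forall>K H L. (K, H) \<in> T \<longrightarrow> L \<in> subgrps n \<longrightarrow> (min K L, min H L) \<in> T"
    and KH: "(K, H) \<in> T" and "K \<le> L" "L \<le> H"
  have "L \<in> subgrps n"
    using sub KH \<open>L \<le> H\<close> unfolding subgrps_def by auto
  with restr KH have "(min K L, min H L) \<in> T"
    by blast
  moreover have "min K L = K" "min H L = L"
    using \<open>K \<le> L\<close> \<open>L \<le> H\<close> by simp_all
  ultimately show "(K, L) \<in> T"
    by simp
next
  fix K H L
  assume down: "\<forall>K H L. (K, H) \<in> T \<longrightarrow> K \<le> L \<longrightarrow> L \<le> H \<longrightarrow> (K, L) \<in> T"
    and KH: "(K, H) \<in> T" and L: "L \<in> subgrps n"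
  have "K \<le> H"
    using le KH by blast
  consider "L \<le> K" | "K \<le> L" "L \<le> H" | "H \<le> L"
    by linarith
  then show "(min K L, min H L) \<in> T"
  proof cases
    case 1
    then have "min K L = L" "min H L = L"
      using \<open>K \<le> H\<close> by simp_all
    with refl L show ?thesis
      by simp
  next
    case 2
    with down KH have "(K, L) \<in> T"
      by blast
    with 2 show ?thesis
      by simp
  next
    case 3
    then show ?thesis
      using KH \<open>K \<le> H\<close> by simp
  qed
qed

lemma transfer_system_iff_on: "transfer_system n T \<longleftrightarrow> transfer_system_on 0 (Suc n) T"
proof -
  have chain: "{0..<0 + Suc n} = subgrps n"
    unfolding subgrps_def by auto
  show ?thesis
    unfolding transfer_system_def transfer_system_on_def chain
    by (intro conj_cong refl, rule restriction_closed_iff_down_closed; assumption)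
qed

definition restrict_chain :: "nat \<Rightarrow> nat \<Rightarrow> (nat \<times> nat) set \<Rightarrow> (nat \<times> nat) set" where
  "restrict_chain b m T = T \<inter> ({b..<b + m} \<times> {b..<b + m})"

lemma transfer_system_on_restrict:
  assumes T: "transfer_system_on a m T" and "a \<le> b" "b + m' \<le> a + m"
  shows "transfer_system_on b m' (restrict_chain b m' T)"
proof (rule transfer_system_onI)
  show "(K, K) \<in> restrict_chain b m' T" if "b \<le> K" "K < b + m'" for K
    using that assms transfer_system_on_refl[OF T, of K] unfolding restrict_chain_def by simp
  show "(K, L) \<in> restrict_chain b m' T"
    if "(K, H) \<in> restrict_chain b m' T" "K \<le> L" "L \<le> H" for K H L
    using that transfer_system_on_down[OF T, of K H L] unfolding restrict_chain_def by auto
qed (use transfer_system_on_le[OF T] transfer_system_on_trans[OF T] in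
      \<open>auto simp: restrict_chain_def\<close>)

definition glue :: "nat \<Rightarrow> nat \<Rightarrow> (nat \<times> nat) set \<Rightarrow> (nat \<times> nat) set \<Rightarrow> (nat \<times> nat) set" where
  "glue a j T1 T2 = {(a, h) | h. a \<le> h \<and> h \<le> a + j} \<union> T1 \<union> T2"

definition bottom_reach :: "nat \<Rightarrow> nat \<Rightarrow> nat \<Rightarrow> (nat \<times> nat) set set" where
  "bottom_reach a k j =
     {T. transfer_system_on a (Suc k) T \<and> (a, a + j) \<in> T \<and> (a, Suc (a + j)) \<notin> T}"

lemma mem_glue:
  "(K, H) \<in> glue a j T1 T2 \<longleftrightarrow> (K = a \<and> a \<le> H \<and> H \<le> a + j) \<or> (K, H) \<in> T1 \<or> (K, H) \<in> T2"
  unfolding glue_def by blast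

lemma transfer_system_on_glue:
  assumes T1: "transfer_system_on (Suc a) j T1"
    and T2: "transfer_system_on (Suc (a + j)) (k - j) T2" and "j \<le> k"
  shows "transfer_system_on a (Suc k) (glue a j T1 T2)"
proof (rule transfer_system_onI)
  note b1 = transfer_system_on_bounds[OF T1] and b2 = transfer_system_on_bounds[OF T2]
  show "a \<le> K \<and> K \<le> H \<and> H < a + Suc k" if "(K, H) \<in> glue a j T1 T2" for K H
    using that b1[of K H] b2[of K H] \<open>j \<le> k\<close> unfolding mem_glue by auto
  show "(K, K) \<in> glue a j T1 T2" if "a \<le> K" "K < a + Suc k" for K
    using that transfer_system_on_refl[OF T1, of K] transfer_system_on_refl[OF T2, of K] \<open>j \<le> k\<close>
    unfolding mem_glue by (cases "K \<le> a + j") auto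
  show "(K, L) \<in> glue a j T1 T2" if KH: "(K, H) \<in> glue a j T1 T2" and HL: "(H, L) \<in> glue a j T1 T2"
    for K H L
  proof -
    consider "K = a" "H \<le> a + j" | "(K, H) \<in> T1" | "(K, H) \<in> T2"
      using KH unfolding mem_glue by blast
    then show ?thesis
    proof cases
      case 1
      then show ?thesis
        using HL b1[of H L] b2[of H L] unfolding mem_glue by auto
    next
      case 2
      then have "(H, L) \<in> T1"
        using HL b1[of K H] b2[of H L] unfolding mem_glue by auto
      with 2 show ?thesis
        using transfer_system_on_trans[OF T1] unfolding mem_glue by blast
    next
      case 3
      then have "(H, L) \<in> T2"
        using HL b2[of K H] b1[of H L] unfolding mem_glue by auto
      with 3 show ?thesis
        using transfer_system_on_trans[OF T2] unfolding mem_glue by blast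
    qed
  qed
  show "(K, L) \<in> glue a j T1 T2" if "(K, H) \<in> glue a j T1 T2" "K \<le> L" "L \<le> H" for K H L
    using that transfer_system_on_down[OF T1, of K H L] transfer_system_on_down[OF T2, of K H L]
    unfolding mem_glue by auto
qed

lemma glue_in_bottom_reach:
  assumes T1: "transfer_system_on (Suc a) j T1"
    and T2: "transfer_system_on (Suc (a + j)) (k - j) T2" and "j \<le> k"
  shows "glue a j T1 T2 \<in> bottom_reach a k j"
  using transfer_system_on_glue[OF assms] transfer_system_on_bounds[OF T1, of a "Suc (a + j)"]
    transfer_system_on_bounds[OF T2, of a "Suc (a + j)"]
  by (auto simp: bottom_reach_def mem_glue)

lemma restrict_glue:
  assumes T1: "transfer_system_on (Suc a) j T1" and T2: "transfer_system_on (Suc (a + j)) (k - j) T2"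
  shows "restrict_chain (Suc a) j (glue a j T1 T2) = T1"
    and "restrict_chain (Suc (a + j)) (k - j) (glue a j T1 T2) = T2"
  using transfer_system_on_subset[OF T1] transfer_system_on_subset[OF T2]
  unfolding restrict_chain_def glue_def by auto

lemma glue_restrict:
  assumes "T \<in> bottom_reach a k j"
  shows "glue a j (restrict_chain (Suc a) j T) (restrict_chain (Suc (a + j)) (k - j) T) = T"
proof -
  have T: "transfer_system_on a (Suc k) T" and reach: "(a, a + j) \<in> T"
    and beyond: "(a, Suc (a + j)) \<notin> T"
    using assms unfolding bottom_reach_def by auto
  have below: "y \<le> a + j" if "(a, y) \<in> T" for y
    using beyond transfer_system_on_down[OF T that, of "Suc (a + j)"] by linarith
  have split: "(x = a \<and> y \<le> a + j) \<or> (Suc a \<le> x \<and> y < Suc (a + j)) \<or> (Suc (a + j) \<le> x \<and> y < Suc (a + k))"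
    if xy: "(x, y) \<in> T" for x y
  proof -
    have "a \<le> x" "x \<le> y" "y < Suc (a + k)"
      using transfer_system_on_bounds[OF T xy] by auto
    moreover have "y \<le> a + j" if "x \<le> a + j"
      using below transfer_system_on_trans[OF T _ xy] transfer_system_on_down[OF T reach, of x] that
        \<open>a \<le> x\<close> by blast
    ultimately show ?thesis
      using below xy by (cases "x = a") auto
  qed
  show ?thesis
  proof
    show "T \<subseteq> glue a j (restrict_chain (Suc a) j T) (restrict_chain (Suc (a + j)) (k - j) T)"
      using split transfer_system_on_le[OF T] unfolding glue_def restrict_chain_def by fastforce
    show "glue a j (restrict_chain (Suc a) j T) (restrict_chain (Suc (a + j)) (k - j) T) \<subseteq> T"
      using transfer_system_on_down[OF T reach] unfolding glue_def restrict_chain_def by auto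
  qed
qed

lemma bij_betw_bottom_reach:
  assumes "j \<le> k"
  shows "bij_betw (\<lambda>T. (restrict_chain (Suc a) j T, restrict_chain (Suc (a + j)) (k - j) T))
           (bottom_reach a k j)
           ({T1. transfer_system_on (Suc a) j T1} \<times> {T2. transfer_system_on (Suc (a + j)) (k - j) T2})"
proof (rule bij_betw_byWitness[where f' = "\<lambda>(T1, T2). glue a j T1 T2"])
  show "\<forall>T \<in> bottom_reach a k j.
      (\<lambda>(T1, T2). glue a j T1 T2) (restrict_chain (Suc a) j T, restrict_chain (Suc (a + j)) (k - j) T) = T"
    using glue_restrict by simp
  show "\<forall>p \<in> {T1. transfer_system_on (Suc a) j T1} \<times> {T2. transfer_system_on (Suc (a + j)) (k - j) T2}.
      (\<lambda>T. (restrict_chain (Suc a) j T, restrict_chain (Suc (a + j)) (k - j) T))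
        ((\<lambda>(T1, T2). glue a j T1 T2) p) = p"
    using restrict_glue by fastforce
  show "(\<lambda>(T1, T2). glue a j T1 T2) `
      ({T1. transfer_system_on (Suc a) j T1} \<times> {T2. transfer_system_on (Suc (a + j)) (k - j) T2})
      \<subseteq> bottom_reach a k j"
    using glue_in_bottom_reach assms by fastforce
  have "transfer_system_on (Suc a) j (restrict_chain (Suc a) j T)"
    and "transfer_system_on (Suc (a + j)) (k - j) (restrict_chain (Suc (a + j)) (k - j) T)"
    if "T \<in> bottom_reach a k j" for T
    using that assms by (auto simp: bottom_reach_def intro: transfer_system_on_restrict)
  then show "(\<lambda>T. (restrict_chain (Suc a) j T, restrict_chain (Suc (a + j)) (k - j) T)) ` bottom_reach a k j
      \<subseteq> {T1. transfer_system_on (Suc a) j T1} \<times> {T2. transfer_system_on (Suc (a + j)) (k - j) T2}"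
    by blast
qed

lemma card_bottom_reach_filter:
  assumes "j \<le> k"
  shows "card {T \<in> bottom_reach a k j. P (restrict_chain (Suc (a + j)) (k - j) T)}
           = card {T1. transfer_system_on (Suc a) j T1}
             * card {T2. transfer_system_on (Suc (a + j)) (k - j) T2 \<and> P T2}"
proof -
  let ?f = "\<lambda>T. (restrict_chain (Suc a) j T, restrict_chain (Suc (a + j)) (k - j) T)"
  let ?B1 = "{T1. transfer_system_on (Suc a) j T1}"
  let ?B2 = "{T2. transfer_system_on (Suc (a + j)) (k - j) T2}"
  have bij: "bij_betw ?f (bottom_reach a k j) (?B1 \<times> ?B2)"
    using bij_betw_bottom_reach[OF assms] .
  have "bij_betw ?f {T \<in> bottom_reach a k j. P (restrict_chain (Suc (a + j)) (k - j) T)}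
      {p \<in> ?B1 \<times> ?B2. P (snd p)}"
    by (rule bij_betw_Collect[OF bij]) simp
  then have "card {T \<in> bottom_reach a k j. P (restrict_chain (Suc (a + j)) (k - j) T)}
      = card {p \<in> ?B1 \<times> ?B2. P (snd p)}"
    by (rule bij_betw_same_card)
  also have "{p \<in> ?B1 \<times> ?B2. P (snd p)} = ?B1 \<times> {T2 \<in> ?B2. P T2}"
    by auto
  finally show ?thesis
    by (simp add: card_cartesian_product)
qed

lemma finite_transfer_system_on: "finite {T. transfer_system_on a m T}"
  by (rule finite_subset[of _ "Pow ({a..<a + m} \<times> {a..<a + m})"])
    (auto dest: transfer_system_on_subset)

lemma transfer_system_on_0: "{T. transfer_system_on a 0 T} = {{}}"
proof -
  have "transfer_system_on a 0 {}"
    by (rule transfer_system_onI) auto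
  then show ?thesis
    using transfer_system_on_subset[of a 0] by auto
qed

lemma transfer_system_on_Suc_eq_UN_bottom_reach:
  "{T. transfer_system_on a (Suc k) T} = (\<Union>j \<in> {0..k}. bottom_reach a k j)"
proof
  show "{T. transfer_system_on a (Suc k) T} \<subseteq> (\<Union>j \<in> {0..k}. bottom_reach a k j)"
  proof
    fix T
    assume "T \<in> {T. transfer_system_on a (Suc k) T}"
    then have T: "transfer_system_on a (Suc k) T"
      by simp
    have "(a, a + 0) \<in> T" "(a, a + Suc k) \<notin> T"
      using transfer_system_on_refl[OF T, of a] transfer_system_on_bounds[OF T, of a "a + Suc k"] by auto
    then obtain j where "j < Suc k" "\<forall>i \<le> j. (a, a + i) \<in> T" "(a, a + Suc j) \<notin> T"
      using ex_least_nat_less[of "\<lambda>i. (a, a + i) \<notin> T"] by blast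
    with T show "T \<in> (\<Union>j \<in> {0..k}. bottom_reach a k j)"
      unfolding bottom_reach_def by auto
  qed
qed (auto simp: bottom_reach_def)

lemma bottom_reach_disjoint:
  assumes "i < j"
  shows "bottom_reach a k i \<inter> bottom_reach a k j = {}"
  using assms transfer_system_on_down[of a "Suc k" _ a "a + j" "Suc (a + i)"]
  unfolding bottom_reach_def by auto

theorem card_transfer_system_on: "card {T. transfer_system_on a m T} = catalan m"
proof (induction m arbitrary: a rule: less_induct)
  case (less m)
  show ?case
  proof (cases m)
    case 0
    then show ?thesis
      by (simp add: transfer_system_on_0 catalan_def)
  next
    case (Suc k)
    have card_reach: "card (bottom_reach a k j) = catalan j * catalan (k - j)" if "j \<le> k" for j
      using card_bottom_reach_filter[OF that, of a "\<lambda>_. True"]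
        less.IH[of j "Suc a"] less.IH[of "k - j" "Suc (a + j)"] Suc that by simp
    have "card {T. transfer_system_on a (Suc k) T} = (\<Sum>j=0..k. card (bottom_reach a k j))"
      unfolding transfer_system_on_Suc_eq_UN_bottom_reach
    proof (rule card_UN_disjoint)
      show "\<forall>j \<in> {0..k}. finite (bottom_reach a k j)"
        using finite_transfer_system_on[of a "Suc k"] unfolding bottom_reach_def
        by (auto intro: finite_subset)
      show "\<forall>i \<in> {0..k}. \<forall>j \<in> {0..k}. i \<noteq> j \<longrightarrow> bottom_reach a k i \<inter> bottom_reach a k j = {}"
        using bottom_reach_disjoint by (metis inf_commute nat_neq_iff)
    qed simp
    also have "\<dots> = catalan (Suc k)"
      by (simp add: card_reach catalan_Suc_convolution)
    finally show ?thesis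
      using Suc by simp
  qed
qed

lemma card_transfer_system_on_top:
  "card {T. transfer_system_on a (Suc k) T \<and> (a, a + k) \<in> T} = catalan k"
proof -
  have "{T. transfer_system_on a (Suc k) T \<and> (a, a + k) \<in> T} = {T \<in> bottom_reach a k k. True}"
    using transfer_system_on_bounds[of a "Suc k" _ a "Suc (a + k)"] unfolding bottom_reach_def by auto
  then show ?thesis
    using card_bottom_reach_filter[of k k a "\<lambda>_. True"]
    by (simp add: card_transfer_system_on transfer_system_on_0 catalan_def)
qed

lemma card_transfer_system_on_top_from_Suc:
  "card {T. transfer_system_on a (Suc (Suc k)) T \<and> (a, Suc (a + k)) \<notin> T \<and> (Suc a, Suc (a + k)) \<in> T}
     = catalan k" (is "card ?S = _")
proof -
  have "?S = {T \<in> bottom_reach a (Suc k) 0. (Suc a, Suc (a + k)) \<in> restrict_chain (Suc a) (Suc k) T}"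
    (is "_ = ?R")
  proof (intro set_eqI iffI)
    fix T
    assume "T \<in> ?S"
    then have T: "transfer_system_on a (Suc (Suc k)) T" and "(a, Suc (a + k)) \<notin> T"
      and top: "(Suc a, Suc (a + k)) \<in> T"
      by auto
    then have "(a, Suc a) \<notin> T"
      using transfer_system_on_trans[OF T _ top] by blast
    with T top show "T \<in> ?R"
      using transfer_system_on_refl[OF T, of a] unfolding bottom_reach_def restrict_chain_def by auto
  next
    fix T
    assume "T \<in> ?R"
    then have T: "transfer_system_on a (Suc (Suc k)) T" and "(a, Suc a) \<notin> T"
      and "(Suc a, Suc (a + k)) \<in> T"
      unfolding bottom_reach_def restrict_chain_def by auto
    moreover have "(a, Suc (a + k)) \<notin> T"
      using transfer_system_on_down[OF T, of a "Suc (a + k)" "Suc a"] \<open>(a, Suc a) \<notin> T\<close> by auto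
    ultimately show "T \<in> ?S"
      by simp
  qed
  then show ?thesis
    using card_bottom_reach_filter[of 0 "Suc k" a "\<lambda>T2. (Suc a, Suc (a + k)) \<in> T2"]
      card_transfer_system_on_top[of "Suc a" k]
    by (simp add: card_transfer_system_on transfer_system_on_0 catalan_def)
qed

abbreviation linked :: "(nat \<times> nat) set \<Rightarrow> nat \<Rightarrow> nat \<Rightarrow> bool" where
  "linked T x y \<equiv> (x, y) \<in> (T \<union> T\<inverse>)\<^sup>*"

definition gap_crossed :: "(nat \<times> nat) set \<Rightarrow> nat \<Rightarrow> bool" where
  "gap_crossed T w \<longleftrightarrow> (\<exists>a b. (a, b) \<in> T \<and> a \<le> w \<and> w < b)"

lemma linked_sym: "linked T x y \<Longrightarrow> linked T y x"
  using sym_rtrancl[OF sym_Un_converse, of T] by (rule symD)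

lemma linked_gap_crossed:
  assumes le: "\<And>a b. (a, b) \<in> T \<Longrightarrow> a \<le> b" and "linked T x y"
  shows "min x y \<le> w \<Longrightarrow> w < max x y \<Longrightarrow> gap_crossed T w"
  using \<open>linked T x y\<close>
proof (induction rule: rtrancl_induct)
  case (step y z)
  have edge: "(min y z, max y z) \<in> T"
    using step.hyps(2) le[of y z] le[of z y] by (auto simp: min_def max_def)
  show ?case
  proof (cases "min x y \<le> w \<and> w < max x y")
    case True
    then show ?thesis
      using step.IH by blast
  next
    case False
    then have "min y z \<le> w \<and> w < max y z"
      using step.prems by linarith
    then show ?thesis
      using edge unfolding gap_crossed_def by blast
  qed
qed simp

lemma trans_successor_chain:
  assumes "u \<le> v" "(u, u) \<in> R" "trans R" "\<And>w. u \<le> w \<Longrightarrow> w < v \<Longrightarrow> (w, Suc w) \<in> R"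
  shows "(u, v) \<in> R"
  using assms(1)
proof (induction v rule: dec_induct)
  case (step w)
  then show ?case
    using assms(3,4) by (meson transD)
qed (rule assms(2))

lemma components_eq_image: "components n T = component_of n T ` subgrps n"
  unfolding components_def component_of_def quotient_def by auto

lemma component_of_eq_iff:
  assumes "x \<in> subgrps n" "y \<in> subgrps n"
  shows "component_of n T x = component_of n T y \<longleftrightarrow> linked T x y"
proof
  assume "component_of n T x = component_of n T y"
  then show "linked T x y"
    using assms(2) unfolding component_of_def by blast
next
  assume xy: "linked T x y"
  have "linked T x z \<longleftrightarrow> linked T y z" for z
    using xy linked_sym rtrancl_trans by metis
  then show "component_of n T x = component_of n T y"
    unfolding component_of_def by simp
qed

lemma linked_if_two_components:
  assumes "1 \<le> n" and card: "card (components n T) = 2" and bottom: "component_of n T 0 = {0}"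
  shows "\<not> linked T 0 n \<and> linked T 1 n"
proof -
  have sg: "0 \<in> subgrps n" "1 \<in> subgrps n" "n \<in> subgrps n"
    using assms unfolding subgrps_def by auto
  have not0: "\<not> linked T 0 x" if "1 \<le> x" "x \<le> n" for x
  proof
    assume "linked T 0 x"
    then have "x \<in> component_of n T 0"
      using that unfolding component_of_def subgrps_def by simp
    with bottom that show False
      by simp
  qed
  have "linked T 1 n"
  proof (rule ccontr)
    assume not1: "\<not> linked T 1 n"
    have "component_of n T 0 \<noteq> component_of n T 1" "component_of n T 1 \<noteq> component_of n T n"
      "component_of n T 0 \<noteq> component_of n T n"
      using not0[of 1] not0[of n] not1 assms(1) component_of_eq_iff[OF sg(1) sg(2)]
        component_of_eq_iff[OF sg(2) sg(3)] component_of_eq_iff[OF sg(1) sg(3)]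
      by simp_all
    then have "card {component_of n T 0, component_of n T 1, component_of n T n} = 3"
      by simp
    moreover have "{component_of n T 0, component_of n T 1, component_of n T n} \<subseteq> components n T"
      using sg unfolding components_eq_image by blast
    moreover have "finite (components n T)"
      unfolding components_eq_image subgrps_def by simp
    ultimately have "3 \<le> card (components n T)"
      by (metis card_mono)
    with card show False
      by simp
  qed
  with not0[of n] assms show ?thesis
    by simp
qed

lemma transfer_system_subset_complete: "transfer_system n T' \<Longrightarrow> T' \<subseteq> complete_ts n"
  using transfer_system_on_bounds[of 0 "Suc n" T'] transfer_system_iff_on
  unfolding complete_ts_def by fastforce

lemma transfer_system_add_bottom_transfers:
  assumes "transfer_system n C"
  shows "transfer_system n (C \<union> {(0, h) | h. h \<le> n})" (is "transfer_system n ?T'")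
proof -
  have C: "transfer_system_on 0 (Suc n) C"
    using assms transfer_system_iff_on by blast
  have mem: "(K, H) \<in> ?T' \<longleftrightarrow> (K, H) \<in> C \<or> (K = 0 \<and> H \<le> n)" for K H
    by blast
  note bounds = transfer_system_on_bounds[OF C]
  show ?thesis
    unfolding transfer_system_iff_on
  proof (rule transfer_system_onI)
    show "(K, L) \<in> ?T'" if KH: "(K, H) \<in> ?T'" and HL: "(H, L) \<in> ?T'" for K H L
    proof (cases "K = 0")
      case True
      then show ?thesis
        using HL bounds[of H L] unfolding mem by auto
    next
      case False
      then have "(K, H) \<in> C" "H \<noteq> 0"
        using KH bounds[of K H] unfolding mem by auto
      then have "(H, L) \<in> C"
        using HL unfolding mem by auto
      then show ?thesis
        using transfer_system_on_trans[OF C \<open>(K, H) \<in> C\<close>] unfolding mem by blast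
    qed
    show "(K, L) \<in> ?T'" if "(K, H) \<in> ?T'" "K \<le> L" "L \<le> H" for K H L
      using that transfer_system_on_down[OF C, of K H L] unfolding mem by auto
    show "0 \<le> K \<and> K \<le> H \<and> H < 0 + Suc n" if "(K, H) \<in> ?T'" for K H
      using that bounds[of K H] unfolding mem by auto
    show "(K, K) \<in> ?T'" if "0 \<le> K" "K < 0 + Suc n" for K
      using that transfer_system_on_refl[OF C, of K] unfolding mem by auto
  qed
qed

definition component_order :: "nat \<Rightarrow> (nat \<times> nat) set \<Rightarrow> (nat \<times> nat) set" where
  "component_order n T = {(u, v). u \<le> v \<and> v \<le> n \<and> linked T u v}"

context
  fixes n :: nat and T :: "(nat \<times> nat) set"
  assumes T: "transfer_system n T"
begin

lemma T_on_chain: "transfer_system_on 0 (Suc n) T"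
  using T transfer_system_iff_on by blast

lemma linked_iff_gaps_crossed:
  assumes "u \<le> v"
  shows "linked T u v \<longleftrightarrow> (\<forall>w. u \<le> w \<longrightarrow> w < v \<longrightarrow> gap_crossed T w)"
proof
  assume "linked T u v"
  then show "\<forall>w. u \<le> w \<longrightarrow> w < v \<longrightarrow> gap_crossed T w"
    using linked_gap_crossed[of T] transfer_system_on_le[OF T_on_chain] assms by force
next
  assume gaps: "\<forall>w. u \<le> w \<longrightarrow> w < v \<longrightarrow> gap_crossed T w"
  have "linked T w (Suc w)" if crossed: "gap_crossed T w" for w
  proof -
    obtain a b where "(a, b) \<in> T" "a \<le> w" "w < b"
      using crossed unfolding gap_crossed_def by blast
    then have "(a, w) \<in> T" "(a, Suc w) \<in> T"
      using transfer_system_on_down[OF T_on_chain] by simp_all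
    then have "linked T w a" "linked T a (Suc w)"
      by blast+
    then show ?thesis
      by (rule rtrancl_trans)
  qed
  then show "linked T u v"
    using trans_successor_chain[OF assms, of "(T \<union> T\<inverse>)\<^sup>*"] gaps trans_rtrancl by blast
qed

lemma linked_interval:
  assumes "linked T x y" "min x y \<le> u" "u \<le> v" "v \<le> max x y"
  shows "linked T u v"
  using assms linked_gap_crossed[of T x y] transfer_system_on_le[OF T_on_chain]
  by (auto simp: linked_iff_gaps_crossed)

lemma least_in_component_transfers:
  assumes "linked T x y" "x \<le> n" "\<And>z. z < x \<Longrightarrow> \<not> linked T z x"
  shows "(x, y) \<in> T"
  using assms(1)
proof (induction rule: rtrancl_induct)
  case base
  show ?case
    using transfer_system_on_refl[OF T_on_chain] assms(2) by simp
next
  case (step y z)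
  show ?case
  proof (cases "(y, z) \<in> T")
    case True
    with step.IH show ?thesis
      using transfer_system_on_trans[OF T_on_chain] by blast
  next
    case False
    then have zy: "(z, y) \<in> T"
      using step.hyps(2) by blast
    have "linked T z x"
      using linked_sym step.hyps rtrancl.rtrancl_into_rtrancl by metis
    then have "x \<le> z"
      using assms(3) not_le by blast
    then show ?thesis
      using transfer_system_on_down[OF T_on_chain step.IH] transfer_system_on_le[OF T_on_chain zy] by simp
  qed
qed

lemma component_order_transfer_system: "transfer_system n (component_order n T)"
  unfolding transfer_system_iff_on
proof (rule transfer_system_onI)
  show "(K, L) \<in> component_order n T"
    if "(K, H) \<in> component_order n T" "K \<le> L" "L \<le> H" for K H L
    using that linked_interval[of K H K L] unfolding component_order_def by auto
qed (auto simp: component_order_def intro: rtrancl_trans)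

lemma component_order_saturated: "saturated n (component_order n T)"
  unfolding saturated_def component_order_def using linked_interval by auto

lemma subset_component_order: "T \<subseteq> component_order n T"
  using transfer_system_on_bounds[OF T_on_chain] unfolding component_order_def by fastforce

text \<open>The hull needs an arrow \<open>w \<rightarrow> w + 1\<close> exactly when an arrow of \<open>T\<close> crosses the gap
  between \<open>w\<close> and \<open>w + 1\<close>; saturation and restriction produce it from that arrow.\<close>
lemma component_order_least:
  assumes T': "transfer_system n T'"
    and sat: "\<And>a b u. (a, b) \<in> T \<Longrightarrow> a \<le> u \<Longrightarrow> u \<le> b \<Longrightarrow> (u, b) \<in> T'"
  shows "component_order n T \<subseteq> T'"
proof safe
  fix u v
  assume "(u, v) \<in> component_order n T"
  then have uv: "u \<le> v" "v \<le> n" and "linked T u v"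
    unfolding component_order_def by auto
  have T'_on: "transfer_system_on 0 (Suc n) T'"
    using T' transfer_system_iff_on by blast
  have "(w, Suc w) \<in> T'" if w: "u \<le> w" "w < v" for w
  proof -
    obtain a b where ab: "(a, b) \<in> T" "a \<le> w" "w < b"
      using linked_gap_crossed[OF _ \<open>linked T u v\<close>, of w] transfer_system_on_le[OF T_on_chain] uv w
      unfolding gap_crossed_def by auto
    then show ?thesis
      using transfer_system_on_down[OF T'_on sat[OF ab(1)], of w "Suc w"] by simp
  qed
  moreover have "(u, u) \<in> T'" "trans T'"
    using transfer_system_on_refl[OF T'_on, of u] transfer_system_on_trans[OF T'_on] uv
    by (auto intro: transI)
  ultimately show "(u, v) \<in> T'"
    using trans_successor_chain[OF uv(1)] by blast
qed

lemma Hull_eq_component_order: "Hull n T = component_order n T"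
proof -
  have "component_order n T \<subseteq> T'"
    if "transfer_system n T'" "saturated n T'" "T \<subseteq> T'" for T'
    using that by (intro component_order_least) (auto simp: saturated_def)
  then show ?thesis
    unfolding Hull_def
    using component_order_transfer_system component_order_saturated subset_component_order
    by (intro antisym Inter_greatest Inter_lower) auto
qed

lemma compatible_iff_component_order_subset:
  assumes T': "transfer_system n T'"
  shows "compatible n T T' \<longleftrightarrow> component_order n T \<subseteq> T'"
proof
  assume "compatible n T T'"
  then have compat: "(C, A) \<in> T'"
    if "A \<in> subgrps n" "B \<in> subgrps n" "C \<in> subgrps n" "B \<le> A" "C \<le> A" "(B, A) \<in> T" "(min B C, B) \<in> T'"
    for A B C
    using that unfolding compatible_def by blast
  show "component_order n T \<subseteq> T'"
  proof (rule component_order_least[OF T'])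
    fix a b u
    assume ab: "(a, b) \<in> T" and "a \<le> u" "u \<le> b"
    then have "a \<le> b" "b \<le> n"
      using transfer_system_on_bounds[OF T_on_chain ab] by auto
    moreover have "(min a u, a) \<in> T'"
      using transfer_system_on_refl[of 0 "Suc n" T' a] T' transfer_system_iff_on \<open>a \<le> u\<close> calculation
      by (simp add: min.absorb1)
    ultimately show "(u, b) \<in> T'"
      using compat[of b a u] ab \<open>a \<le> u\<close> \<open>u \<le> b\<close> unfolding subgrps_def by simp
  qed
next
  assume sub: "component_order n T \<subseteq> T'"
  have T'_on: "transfer_system_on 0 (Suc n) T'"
    using T' transfer_system_iff_on by blast
  have "(C, A) \<in> T'" if "C \<le> A" "(B, A) \<in> T" "(min B C, B) \<in> T'" for A B C
  proof (cases "B \<le> C")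
    case True
    then have "linked T C A"
      using linked_interval[of B A C A] that by auto
    moreover have "A \<le> n"
      using transfer_system_on_bounds[OF T_on_chain \<open>(B, A) \<in> T\<close>] by simp
    ultimately show ?thesis
      using sub \<open>C \<le> A\<close> unfolding component_order_def by auto
  next
    case False
    then have "(C, B) \<in> T'"
      using that(3) by (simp add: min.absorb2)
    moreover have "(B, A) \<in> T'"
      using that(2) sub subset_component_order by blast
    ultimately show ?thesis
      by (rule transfer_system_on_trans[OF T'_on])
  qed
  then show "compatible n T T'"
    using sub subset_component_order unfolding compatible_def by blast
qed

lemma linked_above_bottom:
  assumes "linked T 0 n \<or> linked T 1 n" "1 \<le> u" "u \<le> v" "v \<le> n"
  shows "linked T u v"
  using assms linked_interval[of 0 n u v] linked_interval[of 1 n u v] by auto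

lemma complete_ts_if_bottom_transfers:
  assumes linked: "linked T 0 n \<or> linked T 1 n" and T': "transfer_system n T'"
    and sub: "component_order n T \<subseteq> T'" and "(0, h) \<in> T'" "1 \<le> h"
  shows "T' = complete_ts n"
proof -
  have T'_on: "transfer_system_on 0 (Suc n) T'"
    using T' transfer_system_iff_on by blast
  have upper: "(u, v) \<in> T'" if "1 \<le> u" "u \<le> v" "v \<le> n" for u v
    using linked_above_bottom[OF linked that] sub that unfolding component_order_def by auto
  have "(0, 1) \<in> T'" "1 \<le> n"
    using transfer_system_on_down[OF T'_on \<open>(0, h) \<in> T'\<close>, of 1]
      transfer_system_on_bounds[OF T'_on \<open>(0, h) \<in> T'\<close>] \<open>1 \<le> h\<close> by auto
  then have "(0, n) \<in> T'"
    using upper[of 1 n] transfer_system_on_trans[OF T'_on] by blast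
  then have "(u, v) \<in> T'" if "u \<le> v" "v \<le> n" for u v
    using transfer_system_on_down[OF T'_on \<open>(0, n) \<in> T'\<close>, of v] upper[of u v] that
    by (cases "u = 0") auto
  then have "complete_ts n \<subseteq> T'"
    unfolding complete_ts_def by auto
  then show ?thesis
    using transfer_system_subset_complete[OF T'] by blast
qed

lemma component_order_subset_iff:
  assumes linked: "linked T 0 n \<or> linked T 1 n" and T': "transfer_system n T'"
  shows "component_order n T \<subseteq> T' \<longleftrightarrow> T' = component_order n T \<or> T' = complete_ts n"
proof
  assume sub: "component_order n T \<subseteq> T'"
  show "T' = component_order n T \<or> T' = complete_ts n"
  proof (cases "\<exists>h. (0, h) \<in> T' \<and> 1 \<le> h")
    case True
    then show ?thesis
      using complete_ts_if_bottom_transfers[OF linked T' sub] by blast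
  next
    case False
    have "(u, v) \<in> component_order n T" if "(u, v) \<in> T'" for u v
    proof -
      have "u \<le> v" "v \<le> n"
        using transfer_system_on_bounds[of 0 "Suc n" T' u v] T' transfer_system_iff_on that by auto
      moreover have "linked T u v"
      proof (cases "u = 0")
        case True
        then have "v = 0"
          using False that by (cases v) auto
        with True show ?thesis
          by simp
      qed (use linked_above_bottom[OF linked] calculation in auto)
      ultimately show ?thesis
        unfolding component_order_def by simp
    qed
    with sub show ?thesis
      by auto
  qed
next
  show "T' = component_order n T \<or> T' = complete_ts n \<Longrightarrow> component_order n T \<subseteq> T'"
    using transfer_system_subset_complete[OF component_order_transfer_system] by blast
qed

lemma lesser_simply_paired_iff_linked:
  "lesser_simply_paired n T \<longleftrightarrow> linked T 0 n \<or> linked T 1 n"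
proof
  assume lsp: "lesser_simply_paired n T"
  show "linked T 0 n \<or> linked T 1 n"
  proof (rule ccontr)
    assume "\<not> (linked T 0 n \<or> linked T 1 n)"
    then have not0: "\<not> linked T 0 n" and not1: "\<not> linked T 1 n" and "n \<noteq> 0"
      by auto
    \<comment> \<open>a compatible system strictly between the hull and the complete one\<close>
    define T' where "T' = component_order n T \<union> {(0, h) | h. h \<le> n}"
    have T': "transfer_system n T'"
      unfolding T'_def by (rule transfer_system_add_bottom_transfers[OF component_order_transfer_system])
    moreover have "compatible n T T'" "T \<subseteq> T'"
      using compatible_iff_component_order_subset[OF T'] subset_component_order
      unfolding T'_def by blast+
    ultimately have "T' = component_order n T \<or> T' = complete_ts n"
      using lsp unfolding lesser_simply_paired_def Hull_eq_component_order by blast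
    moreover have "(0, n) \<in> T' - component_order n T"
      using not0 unfolding T'_def component_order_def by auto
    moreover have "(1, n) \<in> complete_ts n - T'"
      using not1 \<open>n \<noteq> 0\<close> unfolding T'_def component_order_def complete_ts_def by auto
    ultimately show False
      by blast
  qed
next
  assume "linked T 0 n \<or> linked T 1 n"
  then show "lesser_simply_paired n T"
    unfolding lesser_simply_paired_def Hull_eq_component_order
    by (simp add: compatible_iff_component_order_subset component_order_subset_iff)
qed

lemma linked_0_iff: "linked T 0 y \<longleftrightarrow> (0, y) \<in> T"
  using least_in_component_transfers[of 0 y] by blast

lemma linked_1_iff:
  assumes "\<not> linked T 0 n"
  shows "linked T 1 n \<longleftrightarrow> (1, n) \<in> T"
proof
  assume linked1: "linked T 1 n"
  have "1 \<le> n"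
    using assms by (cases n) auto
  moreover have "\<not> linked T z 1" if "z < 1" for z
    using that assms rtrancl_trans[OF _ linked1] by blast
  ultimately show "(1, n) \<in> T"
    using least_in_component_transfers[OF linked1] by blast
qed blast

lemma connected_ts_iff_linked: "connected_ts n T \<longleftrightarrow> linked T 0 n"
proof -
  have sg: "0 \<in> subgrps n" "n \<in> subgrps n"
    by (simp_all add: subgrps_def)
  show ?thesis
  proof
    assume "connected_ts n T"
    then obtain c where "component_of n T ` subgrps n = {c}"
      unfolding connected_ts_def components_eq_image by (rule card_1_singletonE)
    then have "component_of n T 0 = component_of n T n"
      using sg by blast
    then show "linked T 0 n"
      using component_of_eq_iff[OF sg] by blast
  next
    assume "linked T 0 n"
    then have "component_of n T x = component_of n T 0" if "x \<in> subgrps n" for x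
      using that sg linked_interval[of 0 n 0 x] linked_sym component_of_eq_iff[of x n 0 T]
      by (simp add: subgrps_def)
    then have "component_of n T ` subgrps n = {component_of n T 0}"
      using sg by blast
    then show "connected_ts n T"
      unfolding connected_ts_def components_eq_image by simp
  qed
qed

lemma two_components_if_linked:
  assumes not0: "\<not> linked T 0 n" and linked1: "linked T 1 n"
  shows "card (components n T) = 2 \<and> component_of n T 0 = {0}"
proof -
  have "1 \<le> n"
    using not0 by (cases n) auto
  then have sg: "0 \<in> subgrps n" "n \<in> subgrps n"
    unfolding subgrps_def by auto
  have upper: "component_of n T x = component_of n T n" if "x \<in> {1..n}" for x
    using that sg linked_interval[OF linked1, of x n] component_of_eq_iff[of x n n T]
    by (simp add: subgrps_def)
  have "component_of n T ` {1..n} = (\<lambda>_. component_of n T n) ` {1..n}"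
    by (rule image_cong[OF refl upper])
  also have "\<dots> = {component_of n T n}"
    using \<open>1 \<le> n\<close> by (intro image_constant[of n]) simp
  finally have "component_of n T ` {1..n} = {component_of n T n}" .
  moreover have "subgrps n = insert 0 {1..n}"
    unfolding subgrps_def by auto
  ultimately have components: "components n T = {component_of n T 0, component_of n T n}"
    unfolding components_eq_image by simp
  have "component_of n T 0 \<noteq> component_of n T n"
    using not0 component_of_eq_iff[OF sg] by simp
  then have "card (components n T) = 2"
    unfolding components by simp
  moreover have "component_of n T 0 = {0}"
  proof -
    have "\<not> linked T 0 y" if "1 \<le> y" "y \<le> n" for y
    proof
      assume "linked T 0 y"
      moreover have "linked T y n"
        using linked_interval[OF linked1, of y n] that by simp
      ultimately show False
        using not0 rtrancl_trans[of 0 y] by blast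
    qed
    then show ?thesis
      unfolding component_of_def subgrps_def by (auto simp: Suc_le_eq)
  qed
  ultimately show ?thesis ..
qed

lemma two_components_iff_linked:
  assumes "1 \<le> n"
  shows "card (components n T) = 2 \<and> component_of n T 0 = {0} \<longleftrightarrow>
    \<not> linked T 0 n \<and> linked T 1 n"
  using linked_if_two_components[OF assms] two_components_if_linked by blast

lemma lesser_simply_paired_iff_transfers:
  "lesser_simply_paired n T \<longleftrightarrow> (0, n) \<in> T \<or> (1, n) \<in> T"
  using lesser_simply_paired_iff_linked linked_0_iff linked_1_iff by blast

end

theorem mainTheorem17:
  fixes p n :: nat
  assumes "prime p" and "n \<ge> 1"
  shows "(\<forall>T. transfer_system n T \<longrightarrow>
            (lesser_simply_paired n T \<longleftrightarrow>
               connected_ts n T \<or>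
               (card (components n T) = 2 \<and> component_of n T 0 = {0})))
       \<and> card {T. transfer_system n T \<and> lesser_simply_paired n T} = catalan n + catalan (n - 1)
       \<and> real (card {T. transfer_system n T \<and> lesser_simply_paired n T})
           = real ((5 * n - 1) * fact (2 * n - 2)) / real (fact (n - 1) * fact (n + 1))
       \<and> real (card {T. transfer_system n T \<and> lesser_simply_paired n T})
           / real (card {T. transfer_system n T})
           = (5 * real n ^ 2 + 9 * real n - 2) / (16 * real n ^ 2 - 4)"
proof -
  obtain m where n: "n = Suc m"
    using assms(2) by (cases n) auto
  have characterization:
    "lesser_simply_paired n T \<longleftrightarrow>
       connected_ts n T \<or> (card (components n T) = 2 \<and> component_of n T 0 = {0})"
    if "transfer_system n T" for T
    using lesser_simply_paired_iff_linked[OF that] connected_ts_iff_linked[OF that]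
      two_components_iff_linked[OF that assms(2)] by blast
  let ?top = "{T. transfer_system_on 0 (Suc n) T \<and> (0, n) \<in> T}"
  let ?below_top = "{T. transfer_system_on 0 (Suc n) T \<and> (0, n) \<notin> T \<and> (1, n) \<in> T}"
  have "{T. transfer_system n T \<and> lesser_simply_paired n T} = ?top \<union> ?below_top"
    using lesser_simply_paired_iff_transfers by (auto simp: transfer_system_iff_on n)
  moreover have "card (?top \<union> ?below_top) = card ?top + card ?below_top"
    by (rule card_Un_disjoint) (auto intro: rev_finite_subset[OF finite_transfer_system_on])
  ultimately have count:
    "card {T. transfer_system n T \<and> lesser_simply_paired n T} = catalan n + catalan (n - 1)"
    using card_transfer_system_on_top[of 0 n] card_transfer_system_on_top_from_Suc[of 0 m] n by simp
  have total: "card {T. transfer_system n T} = catalan (Suc n)"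
    by (simp add: transfer_system_iff_on card_transfer_system_on)
  show ?thesis
    using characterization
    unfolding count total catalan_add_catalan_pred[OF assms(2)]
      catalan_add_pred_div_catalan_Suc[OF assms(2), symmetric]
    by simp
qed

end
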